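(* Let $\varphi=\mathrm{vec}(A)$, $\varphi_0=\mathrm{vec}(A_0)$ with $A,A_0\in\mathbb{R}^{(p-r)\times r}$, $\|A\|_2<1$, $\|A_0\|_2<1$. If $$\|\sin\Theta\{U(\varphi),U(\varphi_0)\}\|_F\le\frac{(1-\|A_0\|_2^2)^2}{8(1+\|A_0\|_2^2)^2},$$ then $$\|U(\varphi)-U(\varphi_0)\|_F\le4\Big\{1+\frac{32\sqrt2(1+\|A_0\|_2^2)^2}{(1-\|A_0\|_2^2)^2}\Big\}\|\sin\Theta\{U(\varphi),U(\varphi_0)\}\|_F .$$ Moreover, for all such $\varphi,\varphi_0$, $\|\sin\Theta\{U(\varphi),U(\varphi_0)\}\|_F\le\sqrt2\,\|U(\varphi)-U(\varphi_0)\|_F$.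
   Context: Fix $1\le r\le p$. For $A\in\mathbb{R}^{(p-r)\times r}$, $\varphi=\mathrm{vec}(A)$, $X_\varphi=\begin{bmatrix}0_{r\times r}&-A^{T}\\ A&0\end{bmatrix}$, $I_{p\times r}=\begin{bmatrix}I_r\\0\end{bmatrix}$, and $U(\varphi)=(I_p+X_\varphi)(I_p-X_\varphi)^{-1}I_{p\times r}\in\mathbb{O}(p,r)$ (Cayley parameterization; $\mathbb{O}(p,r)$ = $p\times r$ matrices with orthonormal columns). For $U,V\in\mathbb{O}(p,r)$ with singular values $\sigma_1\ge\dots\ge\sigma_r$ of $U^TV$, the canonical angles are $\theta_i=\arccos\sigma_i$ and $\|\sin\Theta(U,V)\|_F=(\sum_{i=1}^r\sin^2\theta_i)^{1/2}$. *)

theory Defs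
  imports "HOL-Analysis.Analysis"
begin

text \<open>Index convention: the r coordinates are indexed by a finite type 'r and
the p - r remaining coordinates by a finite type 'k; the ambient index set of
size p is the sum type 'r + 'k (first block Inl = the first r coordinates).\<close>

definition spec_norm :: "real^'n^'m \<Rightarrow> real" where
  "spec_norm M = onorm (\<lambda>x. M *v x)"

definition frob_norm :: "real^'n^'m \<Rightarrow> real" where
  "frob_norm M = sqrt (\<Sum>i\<in>UNIV. \<Sum>j\<in>UNIV. (M $ i $ j)^2)"

definition orthogonal_mat :: "real^'n^'n \<Rightarrow> bool" where
  "orthogonal_mat Q \<longleftrightarrow> transpose Q ** Q = mat 1"

definition diag_mat :: "('n \<Rightarrow> real) \<Rightarrow> real^'n^'n" where
  "diag_mat s = (\<chi> i j. if i = j then s i else 0)"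

definition sing_vals :: "real^'n^'n \<Rightarrow> ('n \<Rightarrow> real)" where
  "sing_vals M = (SOME s. (\<forall>i. s i \<ge> 0) \<and>
      (\<exists>P Q. orthogonal_mat P \<and> orthogonal_mat Q \<and> M = P ** diag_mat s ** transpose Q))"

text \<open>Frobenius norm of sin Theta(U,V): canonical angles theta_i = arccos sigma_i.\<close>
definition sin_theta_F :: "real^'r^'p \<Rightarrow> real^'r^'p \<Rightarrow> real" where
  "sin_theta_F U V = sqrt (\<Sum>i\<in>UNIV. (sin (arccos (sing_vals (transpose U ** V) i)))^2)"

definition X_mat :: "real^'r::finite^'k::finite \<Rightarrow> real^('r + 'k)^('r + 'k)" where
  "X_mat A = (\<chi> a b. case (a, b) of
       (Inl i, Inr k) \<Rightarrow> - (A $ k $ i)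
     | (Inr k, Inl j) \<Rightarrow> A $ k $ j
     | _ \<Rightarrow> 0)"

definition I_pr :: "real^'r::finite^('r + 'k::finite)" where
  "I_pr = (\<chi> a j. case a of Inl i \<Rightarrow> (if i = j then 1 else 0) | Inr _ \<Rightarrow> 0)"

definition cayley_U :: "real^'r^'k \<Rightarrow> real^'r^('r + 'k)" where
  "cayley_U A = (mat 1 + X_mat A) ** matrix_inv (mat 1 - X_mat A) ** I_pr"

end

theory Submission
  imports Defs
begin

text \<open>
  \<open>U = U(\<phi>)\<close> has orthonormal columns and its top block \<open>U\<^sub>1 = I\<^sub>p\<^sub>r\<^sup>T U\<close> is symmetric with
  \<open>x\<^sup>T U\<^sub>1 x \<ge> m |x|\<^sup>2\<close>, \<open>m = (1 - |A|\<^sub>2\<^sup>2) / (1 + |A|\<^sub>2\<^sup>2)\<close>. If \<open>U\<^sup>T U\<^sub>0 = P \<Sigma> Q\<^sup>T\<close>, the rotation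
  \<open>W = Q P\<^sup>T\<close> gives \<open>|U - U\<^sub>0 W|\<^sup>2 = 2 \<Sigma> (1 - \<sigma>\<^sub>i) \<le> 2 |sin \<Theta>|\<^sup>2\<close>, while
  \<open>|U - U\<^sub>0|\<^sup>2 \<ge> 2 \<Sigma> (1 - \<sigma>\<^sub>i) \<ge> |sin \<Theta>|\<^sup>2\<close> because the trace of \<open>U\<^sup>T U\<^sub>0\<close> is at most \<open>\<Sigma> \<sigma>\<^sub>i\<close>.
  It remains to bound \<open>I - W\<close>. With \<open>U\<^sub>0\<^sub>1\<close> and \<open>m\<^sub>0\<close> the same quantities for \<open>U\<^sub>0 = U(\<phi>\<^sub>0)\<close>,
  symmetry of the top blocks gives
  \<open>E - E\<^sup>T W = U\<^sub>1 (I - W) + (I - W) W\<^sup>T U\<^sub>0\<^sub>1 W\<close> for \<open>E = U\<^sub>1 - U\<^sub>0\<^sub>1 W\<close>, and pairing with \<open>I - W\<close>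
  gives \<open>m\<^sub>0 |I - W| \<le> 2 |E| \<le> 2 |U - U\<^sub>0 W|\<close>.
\<close>

section \<open>Matrices as a Euclidean space\<close>

lemma frob_norm_eq_norm: "frob_norm (M::real^'n^'m) = norm M"
  by (simp add: frob_norm_def norm_vec_def L2_set_def sum_nonneg)

lemma inner_matrix: "(A::real^'n^'m) \<bullet> B = (\<Sum>i\<in>UNIV. \<Sum>j\<in>UNIV. A$i$j * B$i$j)"
  by (simp add: inner_vec_def)

lemma inner_matrix_vector_mult: "((A::real^'n^'m) *v x) \<bullet> y = x \<bullet> (transpose A *v y)"
  by (metis dot_lmul_matrix inner_commute transpose_matrix_vector)

lemma inner_matrix_mult_left: "((A::real^'n^'m) ** B) \<bullet> (C::real^'k^'m) = B \<bullet> (transpose A ** C)"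
proof -
  have "(A ** B) \<bullet> C = (\<Sum>i\<in>UNIV. \<Sum>j\<in>UNIV. \<Sum>k\<in>UNIV. A$i$k * B$k$j * C$i$j)"
    by (simp add: inner_matrix matrix_matrix_mult_def sum_distrib_right)
  also have "\<dots> = (\<Sum>i\<in>UNIV. \<Sum>k\<in>UNIV. \<Sum>j\<in>UNIV. A$i$k * B$k$j * C$i$j)"
    by (rule sum.cong[OF refl], rule sum.swap)
  also have "\<dots> = (\<Sum>k\<in>UNIV. \<Sum>j\<in>UNIV. \<Sum>i\<in>UNIV. A$i$k * B$k$j * C$i$j)"
    by (subst sum.swap) (rule sum.cong[OF refl], rule sum.swap)
  also have "\<dots> = B \<bullet> (transpose A ** C)"
    by (simp add: inner_matrix matrix_matrix_mult_def sum_distrib_left transpose_def mult_ac)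
  finally show ?thesis .
qed

lemma inner_matrix_mult_right: "((A::real^'n^'m) ** B) \<bullet> (C::real^'k^'m) = A \<bullet> (C ** transpose B)"
proof -
  have "(A ** B) \<bullet> C = (\<Sum>i\<in>UNIV. \<Sum>j\<in>UNIV. \<Sum>k\<in>UNIV. A$i$k * B$k$j * C$i$j)"
    by (simp add: inner_matrix matrix_matrix_mult_def sum_distrib_right)
  also have "\<dots> = (\<Sum>i\<in>UNIV. \<Sum>k\<in>UNIV. \<Sum>j\<in>UNIV. A$i$k * B$k$j * C$i$j)"
    by (rule sum.cong[OF refl], rule sum.swap)
  also have "\<dots> = A \<bullet> (C ** transpose B)"
    by (simp add: inner_matrix matrix_matrix_mult_def sum_distrib_left transpose_def mult_ac)
  finally show ?thesis .
qed

lemma inner_transpose: "transpose (Y::real^'n^'m) \<bullet> transpose Z = Y \<bullet> Z"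
  unfolding inner_matrix by (simp add: transpose_def) (rule sum.swap)

lemma norm_transpose: "norm (transpose (Y::real^'n^'m)) = norm Y"
  by (simp add: norm_eq_sqrt_inner inner_transpose)

lemma inner_matrix_mult_columns:
  "(Y::real^'n^'m) \<bullet> (B ** Z) = (\<Sum>j\<in>UNIV. column j Y \<bullet> (B *v column j Z))"
  unfolding inner_matrix
  by (simp add: inner_vec_def column_def matrix_matrix_mult_def matrix_vector_mult_def) (rule sum.swap)

lemma norm_matrix_sq_columns: "norm (Y::real^'n^'m) ^ 2 = (\<Sum>j\<in>UNIV. norm (column j Y) ^ 2)"
  using inner_matrix_mult_columns[of Y "mat 1" Y] by (simp add: power2_norm_eq_inner)

lemma transpose_diff: "transpose ((A::real^'n^'m) - B) = transpose A - transpose B"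
  by (simp add: vec_eq_iff transpose_def)

lemma matrix_diff_ldistrib: "(A::real^'n^'m) ** (B - C) = A ** B - A ** C"
  by (simp add: vec_eq_iff matrix_matrix_mult_def sum_subtractf right_diff_distrib)

lemma matrix_diff_rdistrib: "((A::real^'n^'m) - B) ** C = A ** C - B ** C"
  by (simp add: vec_eq_iff matrix_matrix_mult_def sum_subtractf left_diff_distrib)

lemma symmetric_matrix_if_bilinear_symmetric:
  fixes M :: "real^'n^'n"
  assumes "\<And>x y. (M *v x) \<bullet> y = (M *v y) \<bullet> x"
  shows "transpose M = M"
proof -
  have "transpose M *v y = M *v y" for y
  proof -
    have "\<forall>x. x \<bullet> (transpose M *v y - M *v y) = 0"
      using assms
      by (simp add: inner_diff_right inner_matrix_vector_mult[symmetric] inner_commute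
          del: transpose_matrix_vector)
    then show ?thesis by (metis inner_eq_zero_iff right_minus_eq)
  qed
  then show ?thesis by (simp add: matrix_eq)
qed

lemma le_if_sq_le_mult: "0 \<le> (a::real) \<Longrightarrow> 0 \<le> b \<Longrightarrow> a^2 \<le> b * a \<Longrightarrow> a \<le> b"
  by (cases "a = 0") (auto simp: power2_eq_square intro: mult_right_le_imp_le)

section \<open>Matrices with orthonormal columns\<close>

lemma orthonormal_columns_if_isometric:
  fixes W :: "real^'r^'p"
  assumes "\<And>x y. (W *v x) \<bullet> (W *v y) = x \<bullet> y"
  shows "transpose W ** W = mat 1"
proof -
  have "(transpose W ** W) *v y = mat 1 *v y" for y
  proof -
    have "\<forall>x. x \<bullet> ((transpose W ** W) *v y - y) = 0"
      using assms
      by (simp add: inner_diff_right matrix_vector_mul_assoc[symmetric]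
          inner_matrix_vector_mult[symmetric] del: transpose_matrix_vector)
    then show ?thesis by (metis inner_eq_zero_iff matrix_vector_mul_lid right_minus_eq)
  qed
  then show ?thesis by (simp add: matrix_eq)
qed

lemma norm_orthonormal_columns_mult_vec:
  fixes W :: "real^'r^'p"
  assumes "transpose W ** W = mat 1"
  shows "norm (W *v x) = norm x"
proof -
  have "(W *v x) \<bullet> (W *v x) = x \<bullet> x"
    by (simp add: inner_matrix_vector_mult matrix_vector_mul_assoc assms)
  then show ?thesis by (metis norm_eq_sqrt_inner)
qed

lemma norm_orthonormal_columns_mult:
  fixes W :: "real^'r^'p" and Y :: "real^'n^'r"
  assumes "transpose W ** W = mat 1"
  shows "norm (W ** Y) = norm Y"
proof -
  have "(W ** Y) \<bullet> (W ** Y) = Y \<bullet> Y"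
    by (simp add: inner_matrix_mult_left matrix_mul_assoc assms)
  then show ?thesis by (metis norm_eq_sqrt_inner)
qed

lemma norm_transpose_orthonormal_columns_mult_le:
  fixes W :: "real^'r^'p" and Y :: "real^'n^'p"
  assumes "transpose W ** W = mat 1"
  shows "norm (transpose W ** Y) \<le> norm Y"
proof -
  have "norm (transpose W ** Y) ^ 2 = Y \<bullet> (W ** (transpose W ** Y))"
    by (simp add: power2_norm_eq_inner inner_matrix_mult_left)
  also have "\<dots> \<le> norm Y * norm (W ** (transpose W ** Y))"
    by (rule Cauchy_Schwarz_ineq2[THEN order_trans[OF abs_ge_self]])
  also have "\<dots> = norm Y * norm (transpose W ** Y)"
    by (simp add: norm_orthonormal_columns_mult assms)
  finally show ?thesis
    by (rule le_if_sq_le_mult[OF norm_ge_zero norm_ge_zero])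
qed

lemma norm_transpose_orthonormal_columns_mult_vec_le:
  fixes W :: "real^'r^'p"
  assumes "transpose W ** W = mat 1"
  shows "norm (transpose W *v y) \<le> norm y"
proof -
  have "norm (transpose W *v y) ^ 2 = y \<bullet> (W *v (transpose W *v y))"
    by (simp only: power2_norm_eq_inner inner_matrix_vector_mult transpose_transpose)
  also have "\<dots> \<le> norm y * norm (W *v (transpose W *v y))"
    by (rule Cauchy_Schwarz_ineq2[THEN order_trans[OF abs_ge_self]])
  also have "\<dots> = norm y * norm (transpose W *v y)"
    by (simp add: norm_orthonormal_columns_mult_vec assms)
  finally show ?thesis
    by (rule le_if_sq_le_mult[OF norm_ge_zero norm_ge_zero])
qed

lemma norm_mult_orthogonal_matrix:
  fixes Q :: "real^'n^'n" and Y :: "real^'n^'m"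
  assumes "orthogonal_matrix Q"
  shows "norm (Y ** Q) = norm Y"
proof -
  have "(Y ** Q) \<bullet> (Y ** Q) = Y \<bullet> Y"
    using assms
    by (simp add: inner_matrix_mult_right orthogonal_matrix_def matrix_mul_assoc[symmetric])
  then show ?thesis by (metis norm_eq_sqrt_inner)
qed

lemma orthonormal_columns_mult_orthogonal_matrix:
  fixes V :: "real^'r^'p"
  assumes "transpose V ** V = mat 1" and "orthogonal_matrix W"
  shows "transpose (V ** W) ** (V ** W) = mat 1"
  using assms
  by (simp add: matrix_transpose_mul matrix_mul_assoc orthogonal_matrix)
    (simp add: matrix_mul_assoc[symmetric])

lemma inner_self_orthonormal_columns:
  fixes W :: "real^'r^'p"
  assumes "transpose W ** W = mat 1"
  shows "W \<bullet> W = real CARD('r)"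
proof -
  have "W \<bullet> W = mat 1 \<bullet> (mat 1 :: real^'r^'r)"
    using inner_matrix_mult_left[of W "mat 1" W] by (simp add: assms)
  also have "\<dots> = real CARD('r)"
    by (simp add: inner_matrix mat_def if_distrib cong: if_cong)
  finally show ?thesis .
qed

lemma norm_diff_orthonormal_columns_sq:
  fixes U V :: "real^'r^'p"
  assumes "transpose U ** U = mat 1" and "transpose V ** V = mat 1"
  shows "norm (U - V) ^ 2 = 2 * real CARD('r) - 2 * (U \<bullet> V)"
  by (simp add: power2_norm_eq_inner inner_diff_left inner_diff_right inner_commute[of V U]
      inner_self_orthonormal_columns assms)

section \<open>The Cayley parametrization\<close>

lemma sum_UNIV_sum:
  "sum f (UNIV::('a::finite + 'b::finite) set) = (\<Sum>i\<in>UNIV. f (Inl i)) + (\<Sum>k\<in>UNIV. f (Inr k))"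
proof -
  have "sum f (UNIV::('a + 'b) set) = sum f (Inl ` UNIV) + sum f (Inr ` UNIV)"
    by (subst UNIV_sum, rule sum.union_disjoint) auto
  then show ?thesis by (simp add: sum.reindex)
qed

definition upper_block :: "real^('r::finite + 'k::finite) \<Rightarrow> real^'r" where
  "upper_block w = (\<chi> i. w $ Inl i)"

definition lower_block :: "real^('r::finite + 'k::finite) \<Rightarrow> real^'k" where
  "lower_block w = (\<chi> k. w $ Inr k)"

lemma inner_blocks:
  "(w::real^('r::finite + 'k::finite)) \<bullet> z = upper_block w \<bullet> upper_block z + lower_block w \<bullet> lower_block z"
  by (simp add: inner_vec_def sum_UNIV_sum upper_block_def lower_block_def)

lemma norm_sq_blocks:
  "norm (w::real^('r::finite + 'k::finite)) ^ 2 = norm (upper_block w) ^ 2 + norm (lower_block w) ^ 2"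
  by (simp add: power2_norm_eq_inner inner_blocks)

lemma lower_block_diff [simp]: "lower_block (w - z) = lower_block w - lower_block z"
  by (simp add: lower_block_def vec_eq_iff)

lemma X_mat_transpose: "transpose (X_mat A) = - X_mat A"
  by (auto simp: vec_eq_iff X_mat_def transpose_def split: sum.split)

lemma upper_block_X_mat: "upper_block (X_mat A *v w) = - (transpose A *v lower_block w)"
  by (simp add: upper_block_def lower_block_def vec_eq_iff X_mat_def matrix_vector_mult_def
      sum_UNIV_sum transpose_def sum_negf)

lemma lower_block_X_mat: "lower_block (X_mat A *v w) = A *v upper_block w"
  by (simp add: upper_block_def lower_block_def vec_eq_iff X_mat_def matrix_vector_mult_def sum_UNIV_sum)

lemma X_mat_skew: "(X_mat A *v w) \<bullet> z = - (w \<bullet> (X_mat A *v z))"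
proof -
  have "(- X_mat A) *v z = - (X_mat A *v z)"
    by (simp add: vec_eq_iff matrix_vector_mult_def sum_negf)
  then show ?thesis by (simp add: inner_matrix_vector_mult X_mat_transpose)
qed

lemma inner_X_mat_self: "w \<bullet> (X_mat A *v w) = 0"
  using X_mat_skew[of A w w] by (simp add: inner_commute)

lemma norm_matrix_vector_le_spec_norm: "norm ((A::real^'n^'m) *v x) \<le> spec_norm A * norm x"
  unfolding spec_norm_def by (rule onorm) simp

lemma spec_norm_nonneg: "0 \<le> spec_norm (A::real^'n^'m)"
  unfolding spec_norm_def by (rule onorm_pos_le) simp

lemma norm_transpose_vector_le_spec_norm:
  "norm (transpose (A::real^'n^'m) *v y) \<le> spec_norm A * norm y"
proof -
  have "norm (transpose A *v y) ^ 2 = y \<bullet> (A *v (transpose A *v y))"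
    by (simp only: power2_norm_eq_inner inner_matrix_vector_mult transpose_transpose)
  also have "\<dots> \<le> norm y * norm (A *v (transpose A *v y))"
    by (rule Cauchy_Schwarz_ineq2[THEN order_trans[OF abs_ge_self]])
  also have "\<dots> \<le> norm y * (spec_norm A * norm (transpose A *v y))"
    by (rule mult_left_mono[OF norm_matrix_vector_le_spec_norm norm_ge_zero])
  finally have "norm (transpose A *v y) ^ 2 \<le> (spec_norm A * norm y) * norm (transpose A *v y)"
    by (simp add: mult_ac)
  then show ?thesis
    by (rule le_if_sq_le_mult[OF norm_ge_zero mult_nonneg_nonneg[OF spec_norm_nonneg norm_ge_zero]])
qed

lemma norm_X_mat_vector_sq_le: "norm (X_mat A *v w) ^ 2 \<le> (spec_norm A)^2 * norm w ^ 2"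
proof -
  have "norm (X_mat A *v w) ^ 2
        = norm (transpose A *v lower_block w) ^ 2 + norm (A *v upper_block w) ^ 2"
    by (simp add: norm_sq_blocks upper_block_X_mat lower_block_X_mat)
  also have "\<dots> \<le> (spec_norm A * norm (lower_block w))^2 + (spec_norm A * norm (upper_block w))^2"
    by (intro add_mono power_mono norm_matrix_vector_le_spec_norm
        norm_transpose_vector_le_spec_norm norm_ge_zero)
  also have "\<dots> = (spec_norm A)^2 * norm w ^ 2"
    by (simp add: norm_sq_blocks power_mult_distrib algebra_simps)
  finally show ?thesis .
qed

lemma invertible_id_minus_X_mat: "invertible (mat 1 - X_mat A)"
proof -
  have "v = 0" if "(mat 1 - X_mat A) *v v = 0" for v
  proof -
    from that have "v = X_mat A *v v" by (simp add: matrix_vector_mult_diff_rdistrib)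
    then have "v \<bullet> v = 0" using inner_X_mat_self[of v A] by simp
    then show "v = 0" by simp
  qed
  then show ?thesis
    using invertible_left_inverse matrix_left_invertible_ker by blast
qed

lemma matrix_inv_right:
  assumes "invertible (M::real^'n^'n)"
  shows "M ** matrix_inv M = mat 1"
  using assms unfolding invertible_def matrix_inv_def by (rule someI2_ex) blast

lemma upper_block_I_pr: "upper_block (I_pr *v x) = x"
  and lower_block_I_pr: "lower_block (I_pr *v x) = 0"
  by (simp_all add: upper_block_def lower_block_def I_pr_def vec_eq_iff matrix_vector_mult_def
      if_distrib if_distribR cong: if_cong)

lemma I_pr_orthonormal_columns: "transpose (I_pr :: real^'r::finite^('r + 'k::finite)) ** I_pr = mat 1"
  by (rule orthonormal_columns_if_isometric) (simp add: inner_blocks upper_block_I_pr lower_block_I_pr)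

definition cayley_graph_vector :: "real^'r::finite^'k::finite \<Rightarrow> real^'r \<Rightarrow> real^('r + 'k)" where
  "cayley_graph_vector A x = matrix_inv (mat 1 - X_mat A) *v (I_pr *v x)"

lemma cayley_graph_vector:
  fixes A :: "real^'r::finite^'k::finite" and x :: "real^'r"
  defines "w \<equiv> cayley_graph_vector A x"
  shows "I_pr *v x = w - X_mat A *v w" and "cayley_U A *v x = w + X_mat A *v w"
    and "lower_block w = A *v upper_block w"
proof -
  have "(mat 1 - X_mat A) *v w = I_pr *v x"
    unfolding w_def cayley_graph_vector_def
    by (simp only: matrix_vector_mul_assoc[of "mat 1 - X_mat A"]
        matrix_inv_right[OF invertible_id_minus_X_mat] matrix_vector_mul_lid)
  then show Ix: "I_pr *v x = w - X_mat A *v w"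
    by (simp add: matrix_vector_mult_diff_rdistrib)
  show "cayley_U A *v x = w + X_mat A *v w"
    unfolding cayley_U_def w_def cayley_graph_vector_def
    by (simp only: matrix_vector_mul_assoc[symmetric] matrix_vector_mult_add_rdistrib
        matrix_vector_mul_lid)
  have "lower_block (I_pr *v x) = lower_block w - lower_block (X_mat A *v w)"
    by (simp only: Ix lower_block_diff)
  then show "lower_block w = A *v upper_block w"
    by (simp add: lower_block_I_pr lower_block_X_mat)
qed

lemma inner_X_mat_graph_vectors:
  fixes A :: "real^'r::finite^'k::finite"
  assumes "lower_block w = A *v upper_block w" and "lower_block z = A *v upper_block z"
  shows "w \<bullet> (X_mat A *v z) = 0"
  using assms
  by (simp add: inner_blocks upper_block_X_mat lower_block_X_mat inner_matrix_vector_mult)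

lemma cayley_U_orthonormal_columns:
  fixes A :: "real^'r::finite^'k::finite"
  shows "transpose (cayley_U A) ** cayley_U A = mat 1"
proof (rule orthonormal_columns_if_isometric)
  fix x y :: "real^'r"
  define w where "w = cayley_graph_vector A x"
  define z where "z = cayley_graph_vector A y"
  note wx = cayley_graph_vector[where A = A and x = x, folded w_def]
    and zy = cayley_graph_vector[where A = A and x = y, folded z_def]
  have "x \<bullet> y = ((I_pr::real^'r^('r + 'k)) *v x) \<bullet> (I_pr *v y)"
    by (simp add: inner_blocks upper_block_I_pr lower_block_I_pr)
  also have "\<dots> = (w - X_mat A *v w) \<bullet> (z - X_mat A *v z)" by (simp add: wx zy)
  also have "\<dots> = (w + X_mat A *v w) \<bullet> (z + X_mat A *v z)"
    using X_mat_skew[of A w z]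
    by (simp add: inner_diff_left inner_diff_right inner_add_left inner_add_right)
  finally show "(cayley_U A *v x) \<bullet> (cayley_U A *v y) = x \<bullet> y" by (simp add: wx zy)
qed

lemma inner_upper_cayley_U:
  fixes A :: "real^'r::finite^'k::finite"
  defines "w \<equiv> cayley_graph_vector A"
  shows "((transpose I_pr ** cayley_U A) *v x) \<bullet> y
         = w x \<bullet> w y - (X_mat A *v w x) \<bullet> (X_mat A *v w y)"
proof -
  note wx = cayley_graph_vector[where A = A and x = x, folded w_def]
    and wy = cayley_graph_vector[where A = A and x = y, folded w_def]
  have "((transpose I_pr ** cayley_U A) *v x) \<bullet> y = (cayley_U A *v x) \<bullet> (I_pr *v y)"
    by (simp only: matrix_vector_mul_assoc[symmetric] inner_matrix_vector_mult transpose_transpose)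
  also have "\<dots> = (w x + X_mat A *v w x) \<bullet> (w y - X_mat A *v w y)" by (simp add: wx wy)
  also have "\<dots> = w x \<bullet> w y - (X_mat A *v w x) \<bullet> (X_mat A *v w y)"
    using X_mat_skew[of A "w x" "w y"] inner_X_mat_graph_vectors[OF wx(3) wy(3)]
    by (simp add: inner_diff_left inner_diff_right inner_add_left inner_add_right)
  finally show ?thesis .
qed

lemma upper_cayley_U_symmetric:
  fixes A :: "real^'r::finite^'k::finite"
  shows "transpose (transpose I_pr ** cayley_U A) = transpose I_pr ** cayley_U A"
  by (rule symmetric_matrix_if_bilinear_symmetric)
    (simp only: inner_upper_cayley_U, simp add: inner_commute)

lemma upper_cayley_U_coercive:
  fixes A :: "real^'r::finite^'k::finite"
  shows "(1 - (spec_norm A)^2) / (1 + (spec_norm A)^2) * norm x ^ 2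
           \<le> x \<bullet> ((transpose I_pr ** cayley_U A) *v x)"
proof -
  define w where "w = cayley_graph_vector A x"
  note wx = cayley_graph_vector[where A = A and x = x, folded w_def]
  define a where "a = spec_norm A"
  have quad: "x \<bullet> ((transpose I_pr ** cayley_U A) *v x) = norm w ^ 2 - norm (X_mat A *v w) ^ 2"
    by (simp add: inner_commute[of x] inner_upper_cayley_U w_def power2_norm_eq_inner)
  have "norm x ^ 2 = ((I_pr::real^'r^('r + 'k)) *v x) \<bullet> (I_pr *v x)"
    by (simp add: inner_blocks upper_block_I_pr lower_block_I_pr power2_norm_eq_inner)
  also have "\<dots> = (w - X_mat A *v w) \<bullet> (w - X_mat A *v w)" by (simp add: wx)
  also have "\<dots> = norm w ^ 2 + norm (X_mat A *v w) ^ 2"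
    using inner_X_mat_self[of w A]
    by (simp add: inner_diff_left inner_diff_right power2_norm_eq_inner inner_commute)
  finally have "norm x ^ 2 = norm w ^ 2 + norm (X_mat A *v w) ^ 2" .
  moreover have "norm (X_mat A *v w) ^ 2 \<le> a^2 * norm w ^ 2"
    unfolding a_def by (rule norm_X_mat_vector_sq_le)
  ultimately have "(1 - a^2) * norm x ^ 2 \<le> (1 + a^2) * (norm w ^ 2 - norm (X_mat A *v w) ^ 2)"
    by (simp add: algebra_simps)
  then have "(1 - a^2) / (1 + a^2) * norm x ^ 2 \<le> norm w ^ 2 - norm (X_mat A *v w) ^ 2"
    by (simp add: divide_le_eq add_pos_nonneg mult.commute)
  then show ?thesis by (simp add: quad a_def)
qed

section \<open>The spectral theorem and the singular value decomposition\<close>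

lemma eq_0_if_linear_le_quadratic:
  assumes "0 \<le> (a::real)" and "\<And>t. 0 < t \<Longrightarrow> 2 * t * a \<le> t^2 * c"
  shows "a = 0"
proof (rule ccontr)
  assume "a \<noteq> 0"
  with assms(1) have a: "a > 0" by simp
  define t where "t = a / (\<bar>c\<bar> + 1)"
  have t: "t > 0" using a by (simp add: t_def add_pos_nonneg)
  have "2 * t * a \<le> t^2 * c" by (rule assms(2)[OF t])
  then have "2 * a \<le> t * c" using t by (simp add: power2_eq_square mult.assoc)
  also have "\<dots> \<le> t * \<bar>c\<bar>" using t by (simp add: mult_left_mono)
  also have "\<dots> < a" using a by (simp add: t_def field_simps)
  finally show False using a by simp
qed

text \<open>First variation of the Rayleigh quotient: moving a maximizer \<open>x\<^sub>0\<close> in the direction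
  \<open>d = S x\<^sub>0 - \<lambda> x\<^sub>0\<close> raises the quotient to first order by \<open>2 t |d|\<^sup>2\<close>.\<close>

lemma rayleigh_maximizer_is_eigenvector:
  fixes S :: "real^'n^'n"
  assumes sym: "transpose S = S" and W: "subspace W" and inv: "\<forall>x\<in>W. S *v x \<in> W"
    and x0: "x0 \<in> W" "norm x0 = 1"
    and max: "\<And>y. y \<in> W \<Longrightarrow> y \<bullet> (S *v y) \<le> (x0 \<bullet> (S *v x0)) * norm y ^ 2"
  shows "S *v x0 = (x0 \<bullet> (S *v x0)) *\<^sub>R x0"
proof -
  define l where "l = x0 \<bullet> (S *v x0)"
  define d where "d = S *v x0 - l *\<^sub>R x0"
  have dW: "d \<in> W" unfolding d_def using W inv x0 by (simp add: subspace_diff subspace_scale)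
  have x0x0: "x0 \<bullet> x0 = 1" using x0 by (simp add: norm_eq_1)
  have Sx0: "S *v x0 = d + l *\<^sub>R x0" by (simp add: d_def)
  have dx0: "d \<bullet> x0 = 0"
    using x0x0 by (simp add: d_def l_def inner_diff_left inner_diff_right inner_commute)
  have x0Sd: "x0 \<bullet> (S *v d) = d \<bullet> d"
  proof -
    have "x0 \<bullet> (S *v d) = (S *v x0) \<bullet> d"
      by (simp add: inner_matrix_vector_mult sym del: transpose_matrix_vector)
    then show ?thesis using dx0 by (simp add: Sx0 inner_add_left inner_add_right inner_commute)
  qed
  have dSx0: "d \<bullet> (S *v x0) = d \<bullet> d"
    using dx0 by (simp add: Sx0 inner_add_right inner_commute)
  have "2 * t * (d \<bullet> d) \<le> t^2 * (l * (d \<bullet> d) - d \<bullet> (S *v d))" if "t > 0" for t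
  proof -
    have "x0 + t *\<^sub>R d \<in> W" using W x0 dW by (simp add: subspace_add subspace_scale)
    from max[OF this]
    have "(x0 + t *\<^sub>R d) \<bullet> (S *v (x0 + t *\<^sub>R d)) \<le> l * norm (x0 + t *\<^sub>R d) ^ 2"
      by (simp only: l_def)
    moreover have "(x0 + t *\<^sub>R d) \<bullet> (S *v (x0 + t *\<^sub>R d))
                   = l + 2 * t * (d \<bullet> d) + t^2 * (d \<bullet> (S *v d))"
      by (simp add: matrix_vector_right_distrib matrix_vector_mult_scaleR inner_add_left
          inner_add_right x0Sd dSx0 l_def[symmetric] power2_eq_square algebra_simps)
    moreover have "norm (x0 + t *\<^sub>R d) ^ 2 = 1 + t^2 * (d \<bullet> d)"
      using x0x0 dx0 unfolding power2_norm_eq_inner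
      by (simp add: inner_add_left inner_add_right inner_commute power2_eq_square algebra_simps)
    ultimately show ?thesis by (simp add: algebra_simps)
  qed
  then have "d \<bullet> d = 0" by (intro eq_0_if_linear_le_quadratic) auto
  then have "S *v x0 = l *\<^sub>R x0" using Sx0 by simp
  then show ?thesis unfolding l_def .
qed

lemma symmetric_eigenvector_in_subspace:
  fixes S :: "real^'n^'n"
  assumes sym: "transpose S = S" and W: "subspace W" and inv: "\<forall>x\<in>W. S *v x \<in> W"
    and nontriv: "W \<noteq> {0}"
  obtains x0 l where "x0 \<in> W" "norm x0 = 1" "S *v x0 = l *\<^sub>R x0"
proof -
  define q where "q = (\<lambda>x. x \<bullet> (S *v x))"
  define K where "K = W \<inter> sphere 0 1"
  obtain u where u: "u \<in> W" "u \<noteq> 0" using nontriv W subspace_0 by blast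
  have "compact K" unfolding K_def
    by (intro closed_Int_compact closed_subspace W compact_sphere)
  moreover have "(1 / norm u) *\<^sub>R u \<in> K" using u W by (simp add: K_def subspace_scale)
  then have "K \<noteq> {}" by blast
  moreover have "continuous_on K q" unfolding q_def
    by (intro continuous_intros linear_continuous_on bounded_linear_inner_left)
      (simp add: bounded_linear_compose)
  ultimately obtain x0 where x0K: "x0 \<in> K" and x0max: "\<And>y. y \<in> K \<Longrightarrow> q y \<le> q x0"
    using continuous_attains_sup by metis
  have x0: "x0 \<in> W" "norm x0 = 1" using x0K by (auto simp: K_def)
  have "y \<bullet> (S *v y) \<le> (x0 \<bullet> (S *v x0)) * norm y ^ 2" if "y \<in> W" for y
  proof (cases "y = 0")
    case True then show ?thesis by simp
  next
    case False
    then have "(1 / norm y) *\<^sub>R y \<in> K" using that W by (simp add: K_def subspace_scale)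
    then have "q ((1 / norm y) *\<^sub>R y) \<le> q x0" by (rule x0max)
    moreover have "q ((1 / norm y) *\<^sub>R y) = q y / norm y ^ 2"
      by (simp add: q_def matrix_vector_mult_scaleR power2_eq_square)
    ultimately have "q y / norm y ^ 2 \<le> q x0" by simp
    then show ?thesis using False by (simp add: divide_le_eq mult.commute q_def)
  qed
  then show ?thesis by (rule that[OF x0 rayleigh_maximizer_is_eigenvector[OF sym W inv x0]])
qed

lemma symmetric_orthonormal_eigenbasis_subspace:
  fixes S :: "real^'n^'n"
  assumes sym: "transpose S = S"
  shows "subspace W \<Longrightarrow> (\<forall>x\<in>W. S *v x \<in> W) \<Longrightarrow> dim W = n \<Longrightarrow>
    \<exists>B. B \<subseteq> W \<and> pairwise orthogonal B \<and> (\<forall>x\<in>B. norm x = 1 \<and> (\<exists>l. S *v x = l *\<^sub>R x))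
      \<and> card B = n \<and> finite B"
proof (induction n arbitrary: W)
  case 0
  then show ?case by (intro exI[of _ "{}"]) auto
next
  case (Suc n)
  note W = Suc.prems(1) and inv = Suc.prems(2)
  have "W \<noteq> {0}" using Suc.prems(3) by auto
  then obtain x0 l where x0: "x0 \<in> W" "norm x0 = 1" and eig: "S *v x0 = l *\<^sub>R x0"
    by (rule symmetric_eigenvector_in_subspace[OF sym W inv])
  define W' where "W' = {y\<in>W. \<forall>x\<in>span {x0}. orthogonal x y}"
  have W'_iff: "y \<in> W' \<longleftrightarrow> y \<in> W \<and> x0 \<bullet> y = 0" for y
    by (auto simp: W'_def orthogonal_def span_singleton)
  have sW': "subspace W'" using W unfolding subspace_def by (auto simp: W'_iff inner_add_right)
  have inv': "\<forall>y\<in>W'. S *v y \<in> W'"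
  proof
    fix y assume y: "y \<in> W'"
    have "x0 \<bullet> (S *v y) = (S *v x0) \<bullet> y"
      by (simp add: inner_matrix_vector_mult sym del: transpose_matrix_vector)
    also have "\<dots> = 0" using y by (simp add: eig W'_iff)
    finally show "S *v y \<in> W'" using y inv by (simp add: W'_iff)
  qed
  have "dim W' + dim (span {x0}) = dim W"
    unfolding W'_def by (rule dim_subspace_orthogonal_to_vectors) (auto simp: W x0 span_minimal)
  moreover have "x0 \<noteq> 0" using x0(2) by auto
  ultimately have "dim W' = n" using Suc.prems(3) by simp
  then obtain B' where B': "B' \<subseteq> W'" "pairwise orthogonal B'"
      "\<forall>x\<in>B'. norm x = 1 \<and> (\<exists>l. S *v x = l *\<^sub>R x)" "card B' = n" "finite B'"
    using Suc.IH[OF sW' inv'] by blast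
  have "x0 \<notin> B'" using B'(1) x0(2) by (auto simp: W'_iff norm_eq_1)
  show ?case
  proof (intro exI[of _ "insert x0 B'"] conjI)
    show "insert x0 B' \<subseteq> W" using B'(1) x0(1) by (auto simp: W'_iff)
    show "pairwise orthogonal (insert x0 B')"
      using B'(1,2) by (auto simp: pairwise_insert W'_iff orthogonal_def inner_commute)
    show "\<forall>x\<in>insert x0 B'. norm x = 1 \<and> (\<exists>l. S *v x = l *\<^sub>R x)"
      using B'(3) x0(2) eig by blast
    show "card (insert x0 B') = Suc n" using B'(4,5) \<open>x0 \<notin> B'\<close> by simp
    show "finite (insert x0 B')" using B'(5) by simp
  qed
qed

lemma symmetric_orthonormal_eigenvectors:
  fixes S :: "real^'n^'n"
  assumes sym: "transpose S = S"
  obtains f :: "'n \<Rightarrow> real^'n" and l :: "'n \<Rightarrow> real"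
  where "\<forall>i j. f i \<bullet> f j = (if i = j then 1 else 0)" "\<forall>i. S *v f i = l i *\<^sub>R f i"
proof -
  obtain B where B: "pairwise orthogonal B" "\<forall>x\<in>B. norm x = 1 \<and> (\<exists>l. S *v x = l *\<^sub>R x)"
     "card B = CARD('n)" "finite B"
    using symmetric_orthonormal_eigenbasis_subspace[OF sym, of UNIV "CARD('n)"] by auto
  obtain f where f: "bij_betw f (UNIV::'n set) B"
    using finite_same_card_bij[of "UNIV::'n set" B] B by auto
  have fB: "f i \<in> B" for i using f by (auto simp: bij_betw_def)
  define l where "l i = (SOME c. S *v f i = c *\<^sub>R f i)" for i
  have "S *v f i = l i *\<^sub>R f i" for i
    unfolding l_def by (rule someI_ex) (use B(2) fB in blast)
  moreover have "f i \<bullet> f j = (if i = j then 1 else 0)" for i j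
  proof (cases "i = j")
    case True then show ?thesis using B(2) fB by (simp add: norm_eq_1)
  next
    case False
    then have "f i \<noteq> f j" using f by (auto simp: bij_betw_def inj_on_def)
    then show ?thesis using B(1) fB False by (auto simp: pairwise_def orthogonal_def)
  qed
  ultimately show ?thesis using that by blast
qed

lemma orthonormal_family_extend:
  fixes g :: "'n \<Rightarrow> real^'n"
  assumes gK: "\<forall>i\<in>K. \<forall>j\<in>K. g i \<bullet> g j = (if i = j then 1 else 0)"
  obtains h where "\<forall>i j. h i \<bullet> h j = (if i = j then 1 else 0)" "\<forall>i\<in>K. h i = g i"
proof -
  define T where "T = {y \<in> UNIV. \<forall>x\<in>span (g ` K). orthogonal x y}"
  have "inj_on g K"
    using gK by (intro inj_onI) (metis one_neq_zero)
  moreover have "0 \<notin> g ` K" using gK by force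
  then have "independent (g ` K)"
    using gK by (intro pairwise_orthogonal_independent) (auto simp: pairwise_def orthogonal_def)
  ultimately have "dim (span (g ` K)) = card K"
    by (simp add: dim_eq_card_independent card_image)
  moreover have "dim T + dim (span (g ` K)) = dim (UNIV :: (real^'n) set)"
    unfolding T_def by (rule dim_subspace_orthogonal_to_vectors) auto
  ultimately have dT: "dim T = card (UNIV - K)"
    by (simp add: card_Diff_subset)
  have "subspace T" unfolding T_def subspace_def by (auto simp: orthogonal_clauses)
  then obtain C where C: "C \<subseteq> T" "pairwise orthogonal C" "\<And>x. x \<in> C \<Longrightarrow> norm x = 1"
      "independent C" "card C = dim T"
    using orthonormal_basis_subspace by metis
  have "finite C" using C(4) by (rule finiteI_independent)
  then obtain e where e: "bij_betw e (UNIV - K) C"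
    using finite_same_card_bij[of "UNIV - K" C] C(5) dT by auto
  have eC: "i \<notin> K \<Longrightarrow> e i \<in> C" for i using e by (auto simp: bij_betw_def)
  have e_inj: "i \<notin> K \<Longrightarrow> j \<notin> K \<Longrightarrow> e i = e j \<Longrightarrow> i = j" for i j
    using e by (auto simp: bij_betw_def inj_on_def)
  have g_perp_e: "g i \<bullet> e j = 0" if "i \<in> K" "j \<notin> K" for i j
  proof -
    have "g i \<in> span (g ` K)" using that(1) by (simp add: span_base)
    moreover have "e j \<in> T" using C(1) eC that(2) by blast
    ultimately show ?thesis by (simp add: T_def orthogonal_def)
  qed
  define h where "h i = (if i \<in> K then g i else e i)" for i
  have "h i \<bullet> h j = (if i = j then 1 else 0)" for i j
  proof (cases "i \<in> K"; cases "j \<in> K")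
    assume "i \<in> K" "j \<in> K"
    then show ?thesis using gK by (simp add: h_def)
  next
    assume "i \<in> K" "j \<notin> K"
    then show ?thesis using g_perp_e[of i j] by (auto simp: h_def)
  next
    assume "i \<notin> K" "j \<in> K"
    then show ?thesis using g_perp_e[of j i] by (auto simp: h_def inner_commute)
  next
    assume i: "i \<notin> K" and j: "j \<notin> K"
    show ?thesis
    proof (cases "i = j")
      case True
      then show ?thesis using C(3) eC[OF i] i by (simp add: h_def norm_eq_1)
    next
      case False
      then have "e i \<noteq> e j" using e_inj i j by blast
      then show ?thesis using C(2) eC[OF i] eC[OF j] i j False
        by (auto simp: h_def pairwise_def orthogonal_def)
    qed
  qed
  then show ?thesis using that[of h] by (simp add: h_def)
qed

definition matrix_of_columns :: "('n \<Rightarrow> real^'m) \<Rightarrow> real^'n^'m" where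
  "matrix_of_columns f = (\<chi> i j. f j $ i)"

lemma orthogonal_matrix_of_columns:
  "\<forall>i j. f i \<bullet> f j = (if i = j then 1 else 0) \<Longrightarrow> orthogonal_matrix (matrix_of_columns f)"
  by (simp add: orthogonal_matrix vec_eq_iff matrix_matrix_mult_def transpose_def mat_def
      inner_vec_def matrix_of_columns_def mult.commute)

lemma matrix_mult_matrix_of_columns:
  "(M::real^'m^'k) ** matrix_of_columns f = matrix_of_columns (\<lambda>j. M *v f j)"
  by (simp add: vec_eq_iff matrix_matrix_mult_def matrix_vector_mult_def matrix_of_columns_def)

lemma matrix_of_columns_scaled:
  "matrix_of_columns (\<lambda>j. s j *\<^sub>R h j) = matrix_of_columns h ** diag_mat s"
  by (simp add: vec_eq_iff matrix_matrix_mult_def matrix_of_columns_def diag_mat_def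
      if_distrib if_distribR mult.commute cong: if_cong)

text \<open>The right singular vectors are an eigenbasis of \<open>M\<^sup>T M\<close>; the images \<open>M f\<^sub>j\<close> are then
  pairwise orthogonal, and normalizing the nonzero ones and completing gives the left singular vectors.\<close>

lemma svd_exists:
  fixes M :: "real^'n^'n"
  shows "\<exists>s. (\<forall>i. s i \<ge> 0) \<and>
    (\<exists>P Q. orthogonal_mat P \<and> orthogonal_mat Q \<and> M = P ** diag_mat s ** transpose Q)"
proof -
  have "transpose (transpose M ** M) = transpose M ** M"
    by (simp add: matrix_transpose_mul)
  then obtain f :: "'n \<Rightarrow> real^'n" and l :: "'n \<Rightarrow> real"
    where fo: "\<forall>i j. f i \<bullet> f j = (if i = j then 1 else 0)"
      and fe: "\<forall>i. (transpose M ** M) *v f i = l i *\<^sub>R f i"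
    by (rule symmetric_orthonormal_eigenvectors)
  define s where "s j = norm (M *v f j)" for j
  have Mf: "(M *v f i) \<bullet> (M *v f j) = (if i = j then s j ^ 2 else 0)" for i j
  proof -
    have "(M *v f i) \<bullet> (M *v f j) = l j * (f i \<bullet> f j)"
      using fe by (simp add: inner_matrix_vector_mult matrix_vector_mul_assoc del: transpose_matrix_vector)
    with fo show ?thesis by (cases "i = j") (simp_all add: s_def power2_norm_eq_inner)
  qed
  define K where "K = {j. s j \<noteq> 0}"
  define g where "g j = (1 / s j) *\<^sub>R (M *v f j)" for j
  have "\<forall>i\<in>K. \<forall>j\<in>K. g i \<bullet> g j = (if i = j then 1 else 0)"
    using Mf by (auto simp: K_def g_def power2_eq_square)
  then obtain h where ho: "\<forall>i j. h i \<bullet> h j = (if i = j then 1 else 0)" and hg: "\<forall>i\<in>K. h i = g i"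
    by (rule orthonormal_family_extend)
  have "M *v f j = s j *\<^sub>R h j" for j
  proof (cases "s j = 0")
    case True then show ?thesis by (simp add: s_def)
  next
    case False then show ?thesis using hg by (simp add: K_def g_def)
  qed
  then have MF: "M ** matrix_of_columns f = matrix_of_columns h ** diag_mat s"
    by (simp add: matrix_mult_matrix_of_columns matrix_of_columns_scaled)
  have F: "orthogonal_matrix (matrix_of_columns f)" by (rule orthogonal_matrix_of_columns[OF fo])
  then have "M = matrix_of_columns h ** diag_mat s ** transpose (matrix_of_columns f)"
    by (metis MF orthogonal_matrix_def matrix_mul_assoc matrix_mul_rid)
  moreover have H: "orthogonal_matrix (matrix_of_columns h)" by (rule orthogonal_matrix_of_columns[OF ho])
  ultimately show ?thesis
    using F unfolding orthogonal_mat_def orthogonal_matrix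
    by (intro exI[of _ s] conjI exI[of _ "matrix_of_columns h"] exI[of _ "matrix_of_columns f"])
      (simp_all add: s_def)
qed

lemma sing_vals_svd:
  fixes M :: "real^'n^'n"
  obtains P Q where "orthogonal_matrix P" "orthogonal_matrix Q" "\<forall>i. sing_vals M i \<ge> 0"
    "M = P ** diag_mat (sing_vals M) ** transpose Q"
proof -
  have "(\<forall>i. sing_vals M i \<ge> 0) \<and> (\<exists>P Q. orthogonal_mat P \<and> orthogonal_mat Q
          \<and> M = P ** diag_mat (sing_vals M) ** transpose Q)"
    unfolding sing_vals_def by (rule someI_ex[OF svd_exists])
  then obtain P Q where "orthogonal_mat P" "orthogonal_mat Q" "\<forall>i. sing_vals M i \<ge> 0"
      "M = P ** diag_mat (sing_vals M) ** transpose Q"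
    by blast
  then show ?thesis using that by (simp add: orthogonal_mat_def orthogonal_matrix)
qed

section \<open>Canonical angles and the orthogonal Procrustes problem\<close>

lemma diag_mat_mult_axis: "diag_mat s *v axis i 1 = s i *\<^sub>R axis i 1"
  by (simp only: matrix_vector_mult_basis) (simp add: column_def diag_mat_def vec_eq_iff axis_def)

lemma inner_diag_mat: "diag_mat s \<bullet> (Z::real^'n^'n) = (\<Sum>i\<in>UNIV. s i * Z$i$i)"
  unfolding inner_matrix by (simp add: diag_mat_def if_distrib if_distribR cong: if_cong)

lemma singular_value_le_1:
  fixes M P Q :: "real^'n^'n"
  assumes P: "orthogonal_matrix P" and Q: "orthogonal_matrix Q" and s: "\<forall>i. 0 \<le> s i"
    and M: "M = P ** diag_mat s ** transpose Q" and contraction: "\<And>x. norm (M *v x) \<le> norm x"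
  shows "s i \<le> 1"
proof -
  have "M ** Q = P ** diag_mat s"
    using Q by (simp add: M orthogonal_matrix_def flip: matrix_mul_assoc)
  then have "M *v (Q *v axis i 1) = s i *\<^sub>R (P *v axis i 1)"
    by (simp add: matrix_vector_mul_assoc diag_mat_mult_axis matrix_vector_mult_scaleR
        flip: matrix_vector_mul_assoc[of P])
  then have "s i = norm (M *v (Q *v axis i 1))"
    using s P by (simp add: norm_orthonormal_columns_mult_vec orthogonal_matrix_def)
  also have "\<dots> \<le> norm (Q *v axis i 1)" by (rule contraction)
  also have "\<dots> = 1" using Q by (simp add: norm_orthonormal_columns_mult_vec orthogonal_matrix_def)
  finally show ?thesis .
qed

lemma inner_svd_polar_factor:
  fixes P Q :: "real^'n^'n"
  assumes "orthogonal_matrix P" and "orthogonal_matrix Q"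
  shows "(P ** transpose Q) \<bullet> (P ** diag_mat s ** transpose Q) = sum s UNIV"
proof -
  have "(P ** transpose Q) \<bullet> (P ** diag_mat s ** transpose Q)
        = transpose Q \<bullet> (diag_mat s ** transpose Q)"
    using assms(1) by (simp add: inner_matrix_mult_left matrix_mul_assoc orthogonal_matrix_def)
  also have "\<dots> = diag_mat s \<bullet> mat 1"
    using assms(2) by (simp add: inner_commute[of "transpose Q"] inner_matrix_mult_right
        orthogonal_matrix_def)
  finally show ?thesis by (simp add: inner_diag_mat mat_def)
qed

lemma orthogonal_matrix_diagonal_le_1:
  assumes "orthogonal_matrix (Z::real^'n^'n)"
  shows "Z$i$i \<le> 1"
proof -
  have "Z$i$i = (Z *v axis i 1) $ i" by (simp add: matrix_vector_mult_basis column_def)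
  also have "\<dots> \<le> norm (Z *v axis i 1)" using component_le_norm_cart abs_ge_self order_trans by blast
  also have "\<dots> = 1" using assms by (simp add: norm_orthonormal_columns_mult_vec orthogonal_matrix)
  finally show ?thesis .
qed

text \<open>The easy half of von Neumann's trace inequality.\<close>

lemma trace_le_sum_singular_values:
  fixes P Q :: "real^'n^'n"
  assumes P: "orthogonal_matrix P" and Q: "orthogonal_matrix Q" and s: "\<forall>i. 0 \<le> s i"
  shows "mat 1 \<bullet> (P ** diag_mat s ** transpose Q) \<le> sum s UNIV"
proof -
  have "mat 1 \<bullet> (P ** diag_mat s ** transpose Q) = (P ** diag_mat s) \<bullet> Q"
    by (simp add: inner_commute[of "mat 1"] inner_matrix_mult_right)
  also have "\<dots> = diag_mat s \<bullet> (transpose P ** Q)" by (rule inner_matrix_mult_left)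
  also have "\<dots> = (\<Sum>i\<in>UNIV. s i * (transpose P ** Q)$i$i)" by (rule inner_diag_mat)
  also have "\<dots> \<le> (\<Sum>i\<in>UNIV. s i)"
    using s orthogonal_matrix_diagonal_le_1[of "transpose P ** Q"] P Q
    by (intro sum_mono) (simp add: mult_left_le orthogonal_matrix_mul)
  finally show ?thesis .
qed

lemma sin_theta_F_nonneg: "0 \<le> sin_theta_F U V"
  by (simp add: sin_theta_F_def sum_nonneg)

lemma sin_theta_F_svd:
  fixes U V :: "real^'r^'p"
  assumes oU: "transpose U ** U = mat 1" and oV: "transpose V ** V = mat 1"
  obtains P Q s where "orthogonal_matrix P" "orthogonal_matrix Q"
    "transpose U ** V = P ** diag_mat s ** transpose Q" "\<forall>i. 0 \<le> s i \<and> s i \<le> 1"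
    "sin_theta_F U V ^ 2 = (\<Sum>i\<in>UNIV. 1 - (s i)^2)"
proof -
  define s where "s = sing_vals (transpose U ** V)"
  obtain P Q where P: "orthogonal_matrix P" and Q: "orthogonal_matrix Q" and s0: "\<forall>i. 0 \<le> s i"
    and svd: "transpose U ** V = P ** diag_mat s ** transpose Q"
    unfolding s_def by (rule sing_vals_svd)
  have "norm ((transpose U ** V) *v x) \<le> norm x" for x
    using norm_transpose_orthonormal_columns_mult_vec_le[OF oU, of "V *v x"]
    by (simp add: matrix_vector_mul_assoc norm_orthonormal_columns_mult_vec[OF oV]
        del: transpose_matrix_vector)
  then have s1: "\<forall>i. s i \<le> 1" using singular_value_le_1[OF P Q s0 svd] by blast
  have "(sin (arccos (s i)))^2 = 1 - (s i)^2" for i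
  proof -
    have "-1 \<le> s i" "s i \<le> 1" using s0 s1 by (auto intro: order_trans[of _ 0])
    then show ?thesis by (simp add: sin_arccos abs_square_le_1 abs_le_iff)
  qed
  moreover have "0 \<le> (\<Sum>i\<in>UNIV. 1 - (s i)^2)"
    using s0 s1 by (intro sum_nonneg) (simp add: power_le_one)
  ultimately have "sin_theta_F U V ^ 2 = (\<Sum>i\<in>UNIV. 1 - (s i)^2)"
    by (simp add: sin_theta_F_def s_def)
  then show ?thesis using that P Q svd s0 s1 by blast
qed

lemma sin_theta_F_le_norm_diff:
  fixes U V :: "real^'r^'p"
  assumes oU: "transpose U ** U = mat 1" and oV: "transpose V ** V = mat 1"
  shows "sin_theta_F U V \<le> norm (U - V)"
proof -
  obtain P Q s where P: "orthogonal_matrix P" and Q: "orthogonal_matrix Q"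
    and svd: "transpose U ** V = P ** diag_mat s ** transpose Q" and s: "\<forall>i. 0 \<le> s i \<and> s i \<le> 1"
    and st: "sin_theta_F U V ^ 2 = (\<Sum>i\<in>UNIV. 1 - (s i)^2)"
    using sin_theta_F_svd[OF oU oV] by blast
  have UV: "U \<bullet> V = mat 1 \<bullet> (transpose U ** V)"
    by (simp add: inner_commute[of "mat 1"] inner_matrix_mult_left inner_commute[of U])
  have "1 - (s i)^2 \<le> 2 - 2 * s i" for i
    using zero_le_power2[of "1 - s i"] unfolding power2_diff by simp
  then have "sin_theta_F U V ^ 2 \<le> (\<Sum>i\<in>UNIV. 2 - 2 * s i)"
    unfolding st by (simp add: sum_mono)
  also have "\<dots> = 2 * real CARD('r) - 2 * sum s UNIV"
    by (simp add: sum_subtractf sum_distrib_left)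
  also have "\<dots> \<le> 2 * real CARD('r) - 2 * (U \<bullet> V)"
    using trace_le_sum_singular_values[OF P Q] s by (simp add: UV svd)
  also have "\<dots> = norm (U - V) ^ 2" by (simp add: norm_diff_orthonormal_columns_sq oU oV)
  finally show ?thesis by (rule power2_le_imp_le) simp
qed

text \<open>The rotation \<open>W = Q P\<^sup>T\<close> built from the SVD \<open>U\<^sup>T V = P \<Sigma> Q\<^sup>T\<close> solves the
  orthogonal Procrustes problem; its residual is controlled by the canonical angles
  because \<open>1 - cos \<theta> \<le> 1 - cos\<^sup>2 \<theta>\<close>.\<close>

lemma procrustes_sin_theta_F:
  fixes U V :: "real^'r^'p"
  assumes oU: "transpose U ** U = mat 1" and oV: "transpose V ** V = mat 1"
  obtains W where "orthogonal_matrix W" "norm (U - V ** W) \<le> sqrt 2 * sin_theta_F U V"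
proof -
  obtain P Q s where P: "orthogonal_matrix P" and Q: "orthogonal_matrix Q"
    and svd: "transpose U ** V = P ** diag_mat s ** transpose Q" and s: "\<forall>i. 0 \<le> s i \<and> s i \<le> 1"
    and st: "sin_theta_F U V ^ 2 = (\<Sum>i\<in>UNIV. 1 - (s i)^2)"
    using sin_theta_F_svd[OF oU oV] by blast
  define W where "W = Q ** transpose P"
  have W: "orthogonal_matrix W" unfolding W_def using P Q by (simp add: orthogonal_matrix_mul)
  have "U \<bullet> (V ** W) = V \<bullet> (U ** (P ** transpose Q))"
    by (simp add: inner_commute[of U] inner_matrix_mult_right W_def matrix_transpose_mul)
  also have "\<dots> = (P ** transpose Q) \<bullet> (transpose U ** V)"
    by (simp add: inner_commute[of V] inner_matrix_mult_left)
  also have "\<dots> = sum s UNIV" by (simp add: svd inner_svd_polar_factor[OF P Q])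
  finally have "norm (U - V ** W) ^ 2 = (\<Sum>i\<in>UNIV. 2 - 2 * s i)"
    by (simp add: norm_diff_orthonormal_columns_sq oU orthonormal_columns_mult_orthogonal_matrix[OF oV W]
        sum_subtractf sum_distrib_left)
  also have "\<dots> \<le> (\<Sum>i\<in>UNIV. 2 * (1 - (s i)^2))"
    using s by (intro sum_mono) (simp add: power2_eq_square mult_left_le)
  also have "\<dots> = (sqrt 2 * sin_theta_F U V) ^ 2"
    by (simp add: power_mult_distrib st sum_distrib_left)
  finally have "norm (U - V ** W) \<le> sqrt 2 * sin_theta_F U V"
    by (rule power2_le_imp_le) (simp add: sin_theta_F_nonneg)
  with W show ?thesis by (rule that)
qed

section \<open>Perturbation of the rotation\<close>

lemma quadratic_form_columns_ge:
  fixes H :: "real^'n^'n" and X :: "real^'m^'n"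
  assumes "\<And>x. m * norm x ^ 2 \<le> x \<bullet> (H *v x)"
  shows "m * norm X ^ 2 \<le> X \<bullet> (H ** X)"
  using assms
  by (simp add: inner_matrix_mult_columns norm_matrix_sq_columns sum_distrib_left sum_mono)

text \<open>With \<open>X = I - W\<close> and \<open>E = S - T W\<close>, symmetry of \<open>S\<close> and \<open>T\<close> gives
  \<open>E - E\<^sup>T W = S X + X (W\<^sup>T T W)\<close>, whose inner product with \<open>X\<close> is at least \<open>m |X|\<^sup>2\<close>.\<close>

lemma norm_id_minus_orthogonal_le:
  fixes S T W :: "real^'n^'n"
  assumes symS: "transpose S = S" and symT: "transpose T = T" and W: "orthogonal_matrix W"
    and posS: "\<And>x. 0 \<le> x \<bullet> (S *v x)"
    and m: "0 < m" and posT: "\<And>x. m * norm x ^ 2 \<le> x \<bullet> (T *v x)"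
  shows "m * norm (mat 1 - W) \<le> 2 * norm (S - T ** W)"
proof -
  define X where "X = mat 1 - W"
  define E where "E = S - T ** W"
  define H where "H = transpose W ** T ** W"
  have WW: "W ** transpose W = mat 1" using W by (simp add: orthogonal_matrix_def)
  have decomp: "E - transpose E ** W = S ** X + X ** H"
    by (simp add: X_def E_def H_def transpose_diff matrix_transpose_mul symS symT
        matrix_diff_ldistrib matrix_diff_rdistrib matrix_mul_assoc WW)
  have posH: "m * norm x ^ 2 \<le> x \<bullet> (H *v x)" for x
  proof -
    have "x \<bullet> (H *v x) = (W *v x) \<bullet> (T *v (W *v x))"
      by (simp add: H_def inner_matrix_vector_mult matrix_vector_mul_assoc matrix_mul_assoc
          del: transpose_matrix_vector)
    then show ?thesis
      using posT[of "W *v x"] W by (simp add: norm_orthonormal_columns_mult_vec orthogonal_matrix)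
  qed
  have "X \<bullet> (X ** H) = transpose X \<bullet> (H ** transpose X)"
    by (metis inner_transpose matrix_transpose_mul H_def symT matrix_transpose_mul transpose_transpose
        matrix_mul_assoc)
  then have "m * norm X ^ 2 \<le> X \<bullet> (X ** H)"
    using quadratic_form_columns_ge[of m H "transpose X", OF posH] by (simp add: norm_transpose)
  moreover have "0 \<le> X \<bullet> (S ** X)"
    using quadratic_form_columns_ge[of 0 S X] posS by simp
  ultimately have "m * norm X ^ 2 \<le> X \<bullet> (E - transpose E ** W)"
    by (simp add: decomp inner_add_right)
  also have "\<dots> \<le> norm X * norm (E - transpose E ** W)"
    by (rule Cauchy_Schwarz_ineq2[THEN order_trans[OF abs_ge_self]])
  also have "\<dots> \<le> norm X * (2 * norm E)"
    using norm_triangle_ineq4[of E "transpose E ** W"]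
    by (intro mult_left_mono) (simp_all add: norm_mult_orthogonal_matrix[OF W] norm_transpose)
  finally have "(m * norm X) * norm X \<le> (2 * norm E) * norm X"
    by (simp add: power2_eq_square mult_ac)
  then show ?thesis
    by (cases "norm X = 0") (simp_all add: X_def E_def m)
qed

lemma norm_diff_le_procrustes_residual:
  fixes U V J :: "real^'r^'p" and W :: "real^'r^'r"
  assumes oV: "transpose V ** V = mat 1" and oJ: "transpose J ** J = mat 1"
    and W: "orthogonal_matrix W"
    and symU: "transpose (transpose J ** U) = transpose J ** U"
    and symV: "transpose (transpose J ** V) = transpose J ** V"
    and posU: "\<And>x. 0 \<le> x \<bullet> ((transpose J ** U) *v x)"
    and m: "0 < m" and posV: "\<And>x. m * norm x ^ 2 \<le> x \<bullet> ((transpose J ** V) *v x)"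
  shows "norm (U - V) \<le> (1 + 2 / m) * norm (U - V ** W)"
proof -
  have "m * norm (mat 1 - W) \<le> 2 * norm (transpose J ** U - (transpose J ** V) ** W)"
    by (rule norm_id_minus_orthogonal_le[OF symU symV W posU m posV])
  also have "\<dots> = 2 * norm (transpose J ** (U - V ** W))"
    by (simp add: matrix_diff_ldistrib matrix_mul_assoc)
  also have "\<dots> \<le> 2 * norm (U - V ** W)"
    using norm_transpose_orthonormal_columns_mult_le[OF oJ] by simp
  finally have IW: "norm (mat 1 - W) \<le> 2 / m * norm (U - V ** W)"
    using m by (simp add: field_simps)
  have split: "(U - V ** W) - V ** (mat 1 - W) = U - V"
    by (simp add: matrix_diff_ldistrib)
  have "norm (U - V) \<le> norm (U - V ** W) + norm (V ** (mat 1 - W))"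
    using norm_triangle_ineq4[of "U - V ** W" "V ** (mat 1 - W)"] unfolding split .
  then have "norm (U - V) \<le> norm (U - V ** W) + norm (mat 1 - W)"
    by (simp add: norm_orthonormal_columns_mult[OF oV])
  with IW show ?thesis by (simp add: algebra_simps)
qed

lemma upper_cayley_U_nonneg:
  fixes A :: "real^'r::finite^'k::finite"
  assumes "spec_norm A < 1"
  shows "0 \<le> x \<bullet> ((transpose I_pr ** cayley_U A) *v x)"
proof -
  have "(spec_norm A)^2 < 1"
    using assms spec_norm_nonneg[of A] by (simp add: power_less_one_iff abs_less_iff)
  then have "0 \<le> (1 - (spec_norm A)^2) / (1 + (spec_norm A)^2) * norm x ^ 2"
    by (simp add: add_pos_nonneg)
  then show ?thesis using upper_cayley_U_coercive order_trans by blast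
qed

lemma norm_cayley_U_diff_le_sin_theta_F:
  fixes A A0 :: "real^'r::finite^'k::finite"
  assumes "spec_norm A < 1"
  defines "m \<equiv> (1 - (spec_norm A0)^2) / (1 + (spec_norm A0)^2)"
  assumes "0 < m"
  shows "norm (cayley_U A - cayley_U A0)
           \<le> sqrt 2 * (1 + 2 / m) * sin_theta_F (cayley_U A) (cayley_U A0)"
proof -
  define U V where "U = cayley_U A" and "V = cayley_U A0"
  have oU: "transpose U ** U = mat 1" and oV: "transpose V ** V = mat 1"
    by (simp_all add: U_def V_def cayley_U_orthonormal_columns)
  obtain W where W: "orthogonal_matrix W" "norm (U - V ** W) \<le> sqrt 2 * sin_theta_F U V"
    by (rule procrustes_sin_theta_F[OF oU oV])
  have "norm (U - V) \<le> (1 + 2 / m) * norm (U - V ** W)"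
    unfolding U_def V_def m_def
    by (rule norm_diff_le_procrustes_residual[OF _ I_pr_orthonormal_columns W(1)
          upper_cayley_U_symmetric upper_cayley_U_symmetric upper_cayley_U_nonneg[OF assms(1)]
          _ upper_cayley_U_coercive])
      (use oV assms(3) in \<open>simp_all add: V_def m_def\<close>)
  also have "\<dots> \<le> (1 + 2 / m) * (sqrt 2 * sin_theta_F U V)"
    using assms(3) by (intro mult_left_mono[OF W(2)]) simp
  finally show ?thesis by (simp add: U_def V_def mult_ac)
qed

lemma constant_bound:
  fixes m :: real
  assumes "0 < m" and "m \<le> 1"
  shows "sqrt 2 * (1 + 2 / m) \<le> 4 * (1 + 32 * sqrt 2 / m^2)"
proof -
  define c where "c = 1 / m"
  have c: "1 \<le> c" using assms by (simp add: c_def)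
  have "sqrt 2 \<le> 2" by (rule real_le_lsqrt) auto
  moreover have "2 * c \<le> 128 * c^2" using c by (simp add: power2_eq_square)
  then have "sqrt 2 * (2 * c) \<le> sqrt 2 * (128 * c^2)" by (intro mult_left_mono) auto
  ultimately show ?thesis
    by (simp add: c_def algebra_simps power_one_over)
qed

theorem theorem5:
  fixes A A0 :: "real^'r::finite^'k::finite"
  assumes "spec_norm A < 1" and "spec_norm A0 < 1"
  shows "(sin_theta_F (cayley_U A) (cayley_U A0)
            \<le> (1 - (spec_norm A0)^2)^2 / (8 * (1 + (spec_norm A0)^2)^2)
          \<longrightarrow> frob_norm (cayley_U A - cayley_U A0)
            \<le> 4 * (1 + 32 * sqrt 2 * (1 + (spec_norm A0)^2)^2 / (1 - (spec_norm A0)^2)^2)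
                * sin_theta_F (cayley_U A) (cayley_U A0))
       \<and> sin_theta_F (cayley_U A) (cayley_U A0) \<le> sqrt 2 * frob_norm (cayley_U A - cayley_U A0)"
proof -
  define a m where "a = spec_norm A0" and "m = (1 - a^2) / (1 + a^2)"
  have "a^2 < 1" using assms(2) spec_norm_nonneg[of A0] by (simp add: a_def power_less_one_iff)
  then have m: "0 < m" "m \<le> 1" by (simp_all add: m_def add_pos_nonneg)
  let ?st = "sin_theta_F (cayley_U A) (cayley_U A0)"
  have "norm (cayley_U A - cayley_U A0) \<le> sqrt 2 * (1 + 2 / m) * ?st"
    using norm_cayley_U_diff_le_sin_theta_F[OF assms(1)] m(1) by (simp add: m_def a_def)
  also have "\<dots> \<le> 4 * (1 + 32 * sqrt 2 / m^2) * ?st"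
    by (rule mult_right_mono[OF constant_bound[OF m] sin_theta_F_nonneg])
  also have "32 * sqrt 2 / m^2 = 32 * sqrt 2 * (1 + a^2)^2 / (1 - a^2)^2"
    by (simp add: m_def power_divide)
  finally have "norm (cayley_U A - cayley_U A0) \<le> 4 * (1 + 32 * sqrt 2 * (1 + a^2)^2 / (1 - a^2)^2) * ?st" .
  moreover have "?st \<le> sqrt 2 * norm (cayley_U A - cayley_U A0)"
  proof -
    have "?st \<le> norm (cayley_U A - cayley_U A0)"
      by (rule sin_theta_F_le_norm_diff[OF cayley_U_orthonormal_columns cayley_U_orthonormal_columns])
    also have "\<dots> \<le> sqrt 2 * norm (cayley_U A - cayley_U A0)"
      using mult_right_mono[of 1 "sqrt 2" "norm (cayley_U A - cayley_U A0)"] by simp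
    finally show ?thesis .
  qed
  ultimately show ?thesis by (simp add: frob_norm_eq_norm a_def)
qed

end
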